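(* Let $d$ be a positive integer and let $A\in\mathbb{R}^{[m]\times[2]}$ be a matrix that does not have an elimination ordering. Then there exists $b\in\mathbb{R}^{[m]}$ such that the solution graph $G(R(A,b))$ is not connected.
   Context: Fix a positive integer $d$ and let $D=\{0,1,\dots,d\}$; $[n]=\{1,\dots,n\}$. For $A\in\mathbb{R}^{[m]\times[n]}$ and $b\in\mathbb{R}^{[m]}$, $R(A,b)=\{x\in D^{[n]} : Ax\ge b\}$. For $R\subseteq D^{[n]}$, the solution graph $G(R)$ is the undirected graph with vertex set $R$ in which $x,y$ are adjacent iff they differ in exactly one coordinate. A matrix $A=(a_{ij})$ with column index set $J$ can be eliminated at column $j\in J$ if (i) for every row $i$ with $a_{ij}>0$ we have $a_{ij'}=0$ for all $j'\in J\setminus\{j\}$, or (ii) for every row $i$ with $a_{ij}<0$ we have $a_{ij'}=0$ for all $j'\in J\setminus\{j\}$. For $J'\subseteq[n]$, $\mathrm{elm}(A,J')$ is the submatrix of $A$ obtained by deleting the columns indexed by $J'$. A sequence $(j_1,\dots,j_n)$ of the elements of $[n]$ is an elimination ordering (EO) of $A$ if for every $t\in[n]$ the matrix $\mathrm{elm}(A,\{j_1,\dots,j_{t-1}\})$ can be eliminated at column $j_t$. *)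

theory Defs
  imports Complex_Main
begin

text \<open>Matrices A in R^([m] x [n]) are functions nat => nat => real, of which only
  rows 1..m and columns 1..n matter; vectors b in R^[m] are functions nat => real
  (entries 1..m matter).\<close>

definition can_elim :: "(nat \<Rightarrow> nat \<Rightarrow> real) \<Rightarrow> nat \<Rightarrow> nat set \<Rightarrow> nat \<Rightarrow> bool" where
  "can_elim A m J j \<longleftrightarrow>
     (\<forall>i\<in>{1..m}. A i j > 0 \<longrightarrow> (\<forall>j'\<in>J - {j}. A i j' = 0)) \<or>
     (\<forall>i\<in>{1..m}. A i j < 0 \<longrightarrow> (\<forall>j'\<in>J - {j}. A i j' = 0))"

text \<open>elm(A, {j_1..j_(t-1)}) has column index set [n] minus those columns.\<close>
definition is_EO :: "(nat \<Rightarrow> nat \<Rightarrow> real) \<Rightarrow> nat \<Rightarrow> nat \<Rightarrow> nat list \<Rightarrow> bool" where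
  "is_EO A m n js \<longleftrightarrow>
     distinct js \<and> set js = {1..n} \<and>
     (\<forall>t < n. can_elim A m ({1..n} - set (take t js)) (js ! t))"

definition has_EO :: "(nat \<Rightarrow> nat \<Rightarrow> real) \<Rightarrow> nat \<Rightarrow> nat \<Rightarrow> bool" where
  "has_EO A m n \<longleftrightarrow> (\<exists>js. is_EO A m n js)"

definition box :: "nat \<Rightarrow> nat \<Rightarrow> (nat \<Rightarrow> nat) set" where
  "box d n = {x. (\<forall>j\<in>{1..n}. x j \<le> d) \<and> (\<forall>j. j \<notin> {1..n} \<longrightarrow> x j = 0)}"

definition solset :: "nat \<Rightarrow> (nat \<Rightarrow> nat \<Rightarrow> real) \<Rightarrow> nat \<Rightarrow> nat \<Rightarrow> (nat \<Rightarrow> real) \<Rightarrow> (nat \<Rightarrow> nat) set" where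
  "solset d A m n b = {x \<in> box d n. \<forall>i\<in>{1..m}. (\<Sum>j=1..n. A i j * real (x j)) \<ge> b i}"

definition adjacent :: "nat \<Rightarrow> (nat \<Rightarrow> nat) \<Rightarrow> (nat \<Rightarrow> nat) \<Rightarrow> bool" where
  "adjacent n x y \<longleftrightarrow> card {j\<in>{1..n}. x j \<noteq> y j} = 1"

definition sol_edges :: "nat \<Rightarrow> (nat \<Rightarrow> nat) set \<Rightarrow> ((nat \<Rightarrow> nat) \<times> (nat \<Rightarrow> nat)) set" where
  "sol_edges n R = {(x, y). x \<in> R \<and> y \<in> R \<and> adjacent n x y}"

definition graph_connected :: "nat \<Rightarrow> (nat \<Rightarrow> nat) set \<Rightarrow> bool" where
  "graph_connected n R \<longleftrightarrow> (\<forall>x\<in>R. \<forall>y\<in>R. (x, y) \<in> (sol_edges n R)\<^sup>*)"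

end

theory Submission
  imports Defs
begin

text \<open>Without an elimination ordering neither column of A can be eliminated first, so each
  column has a positive and a negative entry in rows whose other entry is nonzero. Hence A has
  either a row (+,+) and a row (-,-), or a row (+,-) and a row (-,+). In the first case
  b i = min (A i 1) (A i 2) admits (1,0) and (0,1); of these, the unit vector in the
  direction where the (-,-) row is more negative has no neighbour, since the (+,+) row cuts
  off the origin and the (-,-) row everything else. In the second case
  b i = min 0 (A i 1 + A i 2) admits (0,0) and (1,1), and the (-,+) and (+,-) rows cut off
  all neighbours of (0,0).\<close>

lemma not_connected_if_isolated:
  assumes "p \<in> R" "q \<in> R" "p \<noteq> q" "\<forall>y\<in>R. \<not> adjacent n p y"
  shows "\<not> graph_connected n R"
proof
  assume "graph_connected n R"
  then have "(p, q) \<in> (sol_edges n R)\<^sup>*"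
    using assms unfolding graph_connected_def by blast
  then show False
  proof (cases rule: converse_rtranclE)
    case base
    then show ?thesis using assms by simp
  next
    case (step y)
    then show ?thesis using assms unfolding sol_edges_def by blast
  qed
qed

definition point2 :: "nat \<Rightarrow> nat \<Rightarrow> nat \<Rightarrow> nat" where
  "point2 u v = (\<lambda>j. if j = 1 then u else if j = 2 then v else 0)"

lemma point2_apply [simp]: "point2 u v 1 = u" "point2 u v 2 = v"
  unfolding point2_def by auto

lemma point2_eq_iff [simp]: "point2 u v = point2 u' v' \<longleftrightarrow> u = u' \<and> v = v'"
  by (metis point2_apply)

lemma box2_eq_point2: "x \<in> box d 2 \<Longrightarrow> x = point2 (x 1) (x 2)"
  unfolding box_def point2_def by auto

lemma point2_in_solset_iff:
  "point2 u v \<in> solset d A m 2 b \<longleftrightarrow>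
     u \<le> d \<and> v \<le> d \<and> (\<forall>i\<in>{1..m}. b i \<le> A i 1 * real u + A i 2 * real v)"
  unfolding solset_def box_def point2_def by (auto simp: numeral_2_eq_2)

lemma point2_notin_solset:
  assumes "i \<in> {1..m}" and "A i 1 * real u + A i 2 * real v < b i"
  shows "point2 u v \<notin> solset d A m 2 b"
  using assms unfolding point2_in_solset_iff by fastforce

lemma adjacent2_iff:
  "adjacent 2 x y \<longleftrightarrow> (x 1 \<noteq> y 1 \<and> x 2 = y 2) \<or> (x 1 = y 1 \<and> x 2 \<noteq> y 2)"
proof -
  have "{1..2::nat} = {1, 2}"
    by auto
  then have "{j\<in>{1..2}. x j \<noteq> y j} =
          (if x 1 \<noteq> y 1 then {1} else {}) \<union> (if x 2 \<noteq> y 2 then {2::nat} else {})"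
    by auto
  then show ?thesis
    unfolding adjacent_def by auto
qed

lemma point2_isolated:
  assumes "R \<subseteq> box d 2"
    and "\<And>s. s \<noteq> u \<Longrightarrow> point2 s v \<notin> R"
    and "\<And>t. t \<noteq> v \<Longrightarrow> point2 u t \<notin> R"
  shows "\<forall>y\<in>R. \<not> adjacent 2 (point2 u v) y"
proof (intro ballI notI)
  fix y
  assume "y \<in> R" and "adjacent 2 (point2 u v) y"
  moreover from \<open>y \<in> R\<close> assms(1) have "y = point2 (y 1) (y 2)"
    using box2_eq_point2 by blast
  ultimately show False
    using assms(2,3) unfolding adjacent2_iff by (metis point2_apply)
qed

lemma solset_subset_box: "solset d A m n b \<subseteq> box d n"
  unfolding solset_def by blast

lemma has_EO_2_if_can_elim:
  assumes "j \<in> {1, 2}" and "can_elim A m {1, 2} j"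
  shows "has_EO A m 2"
proof -
  define k where "k = 3 - j"
  have cols: "{1..2} = {j, k}" "{1..2} - {j} = {k}" "j \<noteq> k"
    using assms(1) unfolding k_def by auto
  have "{1..2::nat} = {1, 2}"
    by auto
  then have "can_elim A m {1..2} j"
    using assms(2) by simp
  moreover have "can_elim A m {k} k"
    unfolding can_elim_def by auto
  ultimately have "\<forall>t<2. can_elim A m ({1..2} - set (take t [j, k])) ([j, k] ! t)"
    using cols(2) by (simp add: less_2_cases_iff)
  then have "is_EO A m 2 [j, k]"
    unfolding is_EO_def using cols by simp
  then show ?thesis
    unfolding has_EO_def by blast
qed

lemma sign_rows_if_no_EO_2:
  assumes "\<not> has_EO A m 2"
  obtains a c where "a \<in> {1..m}" "A a 1 > 0" "A a 2 > 0" "c \<in> {1..m}" "A c 1 < 0" "A c 2 < 0"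
    | a c where "a \<in> {1..m}" "A a 1 > 0" "A a 2 < 0" "c \<in> {1..m}" "A c 1 < 0" "A c 2 > 0"
proof -
  have "\<not> can_elim A m {1, 2} 1" "\<not> can_elim A m {1, 2} 2"
    using assms has_EO_2_if_can_elim by blast+
  then have pos1: "\<exists>i\<in>{1..m}. A i 1 > 0 \<and> A i 2 \<noteq> 0"
    and neg1: "\<exists>i\<in>{1..m}. A i 1 < 0 \<and> A i 2 \<noteq> 0"
    and pos2: "\<exists>i\<in>{1..m}. A i 2 > 0 \<and> A i 1 \<noteq> 0"
    and neg2: "\<exists>i\<in>{1..m}. A i 2 < 0 \<and> A i 1 \<noteq> 0"
    unfolding can_elim_def by auto
  show thesis
  proof (cases "(\<exists>a\<in>{1..m}. A a 1 > 0 \<and> A a 2 > 0) \<and> (\<exists>c\<in>{1..m}. A c 1 < 0 \<and> A c 2 < 0)")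
    case True
    then show thesis
      using that(1) by blast
  next
    case False
    then have "(\<exists>a\<in>{1..m}. A a 1 > 0 \<and> A a 2 < 0) \<and> (\<exists>c\<in>{1..m}. A c 1 < 0 \<and> A c 2 > 0)"
      using pos1 neg1 pos2 neg2 by (smt (verit))
    then show thesis
      using that(2) by blast
  qed
qed

lemma solset_disconnected_if_same_sign_rows:
  assumes "d > 0"
    and a: "a \<in> {1..m}" "A a 1 > 0" "A a 2 > 0"
    and c: "c \<in> {1..m}" "A c 1 < 0" "A c 2 < 0"
  shows "\<exists>b. \<not> graph_connected 2 (solset d A m 2 b)"
proof -
  define b where "b i = min (A i 1) (A i 2)" for i
  let ?R = "solset d A m 2 b"
  have feasible: "point2 1 0 \<in> ?R" "point2 0 1 \<in> ?R"
    using \<open>d > 0\<close> unfolding point2_in_solset_iff b_def by auto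
  have "A a 1 * real 0 + A a 2 * real 0 < b a"
    using a(2,3) by (simp add: b_def)
  then have origin: "point2 0 0 \<notin> ?R"
    by (rule point2_notin_solset[OF a(1)])
  consider "A c 1 \<le> A c 2" | "A c 2 \<le> A c 1"
    by linarith
  then show ?thesis
  proof cases
    case 1
    then have bc: "b c = A c 1"
      by (simp add: b_def)
    have "point2 s 0 \<notin> ?R" if "s \<noteq> 1" for s
    proof (cases "s = 0")
      case False
      with that have "A c 1 * real s \<le> A c 1 * 2"
        using c(2) by simp
      then have "A c 1 * real s + A c 2 * real 0 < b c"
        using bc c(2) by linarith
      then show ?thesis
        by (rule point2_notin_solset[OF c(1)])
    qed (simp add: origin)
    moreover have "point2 1 t \<notin> ?R" if "t \<noteq> 0" for t
    proof -
      have "A c 2 * real t \<le> A c 2"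
        using that c(3) by simp
      then have "A c 1 * real 1 + A c 2 * real t < b c"
        using bc c(3) by linarith
      then show ?thesis
        by (rule point2_notin_solset[OF c(1)])
    qed
    ultimately have "\<forall>y\<in>?R. \<not> adjacent 2 (point2 1 0) y"
      using point2_isolated[OF solset_subset_box] by blast
    then show ?thesis
      using not_connected_if_isolated[OF feasible] by auto
  next
    case 2
    then have bc: "b c = A c 2"
      by (simp add: b_def)
    have "point2 0 t \<notin> ?R" if "t \<noteq> 1" for t
    proof (cases "t = 0")
      case False
      with that have "A c 2 * real t \<le> A c 2 * 2"
        using c(3) by simp
      then have "A c 1 * real 0 + A c 2 * real t < b c"
        using bc c(3) by linarith
      then show ?thesis
        by (rule point2_notin_solset[OF c(1)])
    qed (simp add: origin)
    moreover have "point2 s 1 \<notin> ?R" if "s \<noteq> 0" for s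
    proof -
      have "A c 1 * real s \<le> A c 1"
        using that c(2) by simp
      then have "A c 1 * real s + A c 2 * real 1 < b c"
        using bc c(2) by linarith
      then show ?thesis
        by (rule point2_notin_solset[OF c(1)])
    qed
    ultimately have "\<forall>y\<in>?R. \<not> adjacent 2 (point2 0 1) y"
      using point2_isolated[OF solset_subset_box] by blast
    then show ?thesis
      using not_connected_if_isolated[OF feasible(2,1)] by auto
  qed
qed

lemma solset_disconnected_if_mixed_sign_rows:
  assumes "d > 0"
    and a: "a \<in> {1..m}" "A a 1 > 0" "A a 2 < 0"
    and c: "c \<in> {1..m}" "A c 1 < 0" "A c 2 > 0"
  shows "\<exists>b. \<not> graph_connected 2 (solset d A m 2 b)"
proof -
  define b where "b i = min 0 (A i 1 + A i 2)" for i
  let ?R = "solset d A m 2 b"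
  have feasible: "point2 0 0 \<in> ?R" "point2 1 1 \<in> ?R"
    using \<open>d > 0\<close> unfolding point2_in_solset_iff b_def by auto
  have "point2 s 0 \<notin> ?R" if "s \<noteq> 0" for s
  proof -
    have "A c 1 * real s \<le> A c 1"
      using that c(2) by simp
    then have "A c 1 * real s + A c 2 * real 0 < b c"
      using c(2,3) unfolding b_def by linarith
    then show ?thesis
      by (rule point2_notin_solset[OF c(1)])
  qed
  moreover have "point2 0 t \<notin> ?R" if "t \<noteq> 0" for t
  proof -
    have "A a 2 * real t \<le> A a 2"
      using that a(3) by simp
    then have "A a 1 * real 0 + A a 2 * real t < b a"
      using a(2,3) unfolding b_def by linarith
    then show ?thesis
      by (rule point2_notin_solset[OF a(1)])
  qed
  ultimately have "\<forall>y\<in>?R. \<not> adjacent 2 (point2 0 0) y"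
    using point2_isolated[OF solset_subset_box] by blast
  then show ?thesis
    using not_connected_if_isolated[OF feasible] by auto
qed

theorem lemma5:
  fixes d m :: nat and A :: "nat \<Rightarrow> nat \<Rightarrow> real"
  assumes "d > 0"
    and "\<not> has_EO A m 2"
  shows "\<exists>b :: nat \<Rightarrow> real. \<not> graph_connected 2 (solset d A m 2 b)"
  using assms(2)
proof (cases rule: sign_rows_if_no_EO_2)
  case 1
  then show ?thesis
    using solset_disconnected_if_same_sign_rows[OF assms(1)] by blast
next
  case 2
  then show ?thesis
    using solset_disconnected_if_mixed_sign_rows[OF assms(1)] by blast
qed

end
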